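(* Let $\mathcal{X}$ be a finite set and $\underline{Q}$ a lower transition rate operator on $\mathcal{L}(\mathcal{X})$. Then for all $f\in\mathcal{L}(\mathcal{X})$, $x\in\mathcal{X}$ and $t,s>0$: $\underline{T}_tf(x)>\min f$ if and only if $\underline{T}_sf(x)>\min f$.
   Context: $\mathcal{L}(\mathcal{X})$ is the set of real-valued functions on $\mathcal{X}$ with pointwise operations and order, real constants identified with constant functions, $\mathbb{I}_y$ the indicator of $\{y\}$. A lower transition rate operator is a map $\underline{Q}\colon\mathcal{L}(\mathcal{X})\to\mathcal{L}(\mathcal{X})$ such that for all $f,g$, $\lambda\ge0$, $\mu\in\mathbb{R}$, $x,y\in\mathcal{X}$: $\underline{Q}(\mu)=0$; $\underline{Q}(f+g)\ge\underline{Q}f+\underline{Q}g$; $\underline{Q}(\lambda f)=\lambda\underline{Q}f$; $x\ne y\Rightarrow\underline{Q}(\mathbb{I}_y)(x)\ge0$. For each $f$, $t\mapsto\underline{T}_tf$ is the unique solution on $[0,\infty)$ of $\frac{d}{dt}\underline{T}_tf=\underline{Q}\,\underline{T}_tf$ with $\underline{T}_0f=f$ (existence and uniqueness are known). *)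

theory Defs
  imports "HOL-Analysis.Analysis"
begin

definition lower_transition_rate_operator :: "(('x \<Rightarrow> real) \<Rightarrow> ('x \<Rightarrow> real)) \<Rightarrow> bool" where
  "lower_transition_rate_operator Q \<longleftrightarrow>
     (\<forall>\<mu>::real. Q (\<lambda>_. \<mu>) = (\<lambda>_. 0)) \<and>
     (\<forall>f g x. Q (\<lambda>z. f z + g z) x \<ge> Q f x + Q g x) \<and>
     (\<forall>f (c::real) x. c \<ge> 0 \<longrightarrow> Q (\<lambda>z. c * f z) x = c * Q f x) \<and>
     (\<forall>x y. x \<noteq> y \<longrightarrow> Q (\<lambda>z. if z = y then 1 else 0) x \<ge> 0)"

text \<open>T solves the ODE d/dt T_t f = Q (T_t f), T_0 f = f on [0,\<infinity>) (one-sided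
  derivative at 0), componentwise (equivalent to the vector ODE since 'x is finite).\<close>

definition is_lower_transition_semigroup ::
  "(('x \<Rightarrow> real) \<Rightarrow> ('x \<Rightarrow> real)) \<Rightarrow> (real \<Rightarrow> ('x \<Rightarrow> real) \<Rightarrow> ('x \<Rightarrow> real)) \<Rightarrow> bool" where
  "is_lower_transition_semigroup Q T \<longleftrightarrow>
     (\<forall>f. T 0 f = f \<and>
        (\<forall>t\<ge>0. \<forall>x. ((\<lambda>s. T s f x) has_real_derivative Q (T t f) x) (at t within {0..})))"

end

theory Submission
  imports Defs
begin

text \<open>Write \<open>m = min f\<close>. By the positive maximum principle of \<open>Q\<close>
  (\<open>g \<ge> 0\<close> and \<open>g x = 0\<close> imply \<open>Q g x \<ge> 0\<close>), a first-crossing argument shows that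
  \<open>T\<^sub>r f \<ge> m\<close> for all \<open>r\<close>. Positivity persists forwards in time: \<open>T\<^sub>r f x - m\<close>
  stays above a decaying exponential, because \<open>Q g x \<ge> g x \<cdot> Q \<one>\<^sub>x x\<close> for \<open>g \<ge> 0\<close>.
  Vanishing also persists forwards: if \<open>T\<^sub>t f - m\<close> vanishes on \<open>Z\<close> at a time
  \<open>t > 0\<close>, then \<open>Q (T\<^sub>t f) \<le> 0\<close> on \<open>Z\<close>, since the minimum is attained at a time
  with a left neighbourhood; any later function that is maximal on \<open>Z\<close> at a point
  of \<open>Z\<close> is dominated off \<open>Z\<close> by a multiple of \<open>T\<^sub>t f - m\<close>, so \<open>Q\<close> is \<open>\<le> 0\<close> there
  too, and \<open>T f - m\<close> can never leave \<open>0\<close> on \<open>Z\<close>. The two persistence results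
  together make \<open>T\<^sub>t f x > m\<close> independent of \<open>t > 0\<close>.\<close>

lemma has_real_derivative_nonneg_if_left_max:
  fixes F :: "real \<Rightarrow> real"
  assumes "(F has_real_derivative D) (at t within {a..})" and "a < t"
    and "\<And>r. a \<le> r \<Longrightarrow> r < t \<Longrightarrow> F r \<le> F t"
  shows "D \<ge> 0"
proof (rule ccontr)
  assume "\<not> D \<ge> 0"
  then obtain d where d: "d > 0" "\<And>h. h > 0 \<Longrightarrow> t - h \<in> {a..} \<Longrightarrow> h < d \<Longrightarrow> F t < F (t - h)"
    using has_real_derivative_neg_dec_left[OF assms(1)] by force
  define h where "h = min (d / 2) ((t - a) / 2)"
  have "h > 0" "h < d" "a \<le> t - h" "t - h < t"
    using d(1) \<open>a < t\<close> unfolding h_def by (auto simp: min_def field_simps)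
  then show False using d(2) assms(3)[of "t - h"] by fastforce
qed

lemma first_touching_time:
  fixes F :: "real \<Rightarrow> 'a \<Rightarrow> real"
  assumes "finite A"
    and cont: "\<And>z. z \<in> A \<Longrightarrow> continuous_on {a..} (\<lambda>r. F r z)"
    and init: "\<And>z. z \<in> A \<Longrightarrow> F a z < 0"
    and "r0 \<ge> a" "z0 \<in> A" "F r0 z0 \<ge> 0"
  obtains \<tau> z where "\<tau> > a" "z \<in> A" "F \<tau> z = 0" "\<And>z'. z' \<in> A \<Longrightarrow> F \<tau> z' \<le> 0"
    "\<And>r z'. a \<le> r \<Longrightarrow> r < \<tau> \<Longrightarrow> z' \<in> A \<Longrightarrow> F r z' < 0"
proof -
  define B where "B = (\<Union>z\<in>A. {r \<in> {a..}. 0 \<le> F r z})"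
  have "closed B"
    unfolding B_def using \<open>finite A\<close>
    by (intro closed_UN ballI continuous_on_closed_Collect_le[OF continuous_on_const cont])
      auto
  moreover have "B \<noteq> {}" "bdd_below B"
    using assms(4-6) unfolding B_def by (auto intro: bdd_belowI[of _ a])
  ultimately have "Inf B \<in> B" by (rule closed_contains_Inf[rotated 2])
  then obtain z where z: "z \<in> A" "F (Inf B) z \<ge> 0" "Inf B \<ge> a" unfolding B_def by auto
  have before: "F r z' < 0" if "a \<le> r" "r < Inf B" "z' \<in> A" for r z'
  proof (rule ccontr)
    assume "\<not> F r z' < 0"
    then have "r \<in> B" using that unfolding B_def by (auto intro!: bexI[of _ z'])
    then show False using cInf_lower[OF _ \<open>bdd_below B\<close>] \<open>r < Inf B\<close> by force
  qed
  have "Inf B > a" using z init[of z] by (cases "Inf B = a") auto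
  have le0: "F (Inf B) z' \<le> 0" if z': "z' \<in> A" for z'
  proof (rule ccontr)
    assume pos: "\<not> F (Inf B) z' \<le> 0"
    have "continuous_on {a..Inf B} (\<lambda>r. F r z')"
      using cont[OF z'] by (rule continuous_on_subset) auto
    then obtain r where "a \<le> r" "r \<le> Inf B" "F r z' = 0"
      using IVT'[of "\<lambda>r. F r z'" a 0 "Inf B"] init[OF z'] pos \<open>Inf B > a\<close> by auto
    then show False using before[of r z'] z' pos by (cases "r = Inf B") auto
  qed
  show thesis
    using that[OF \<open>Inf B > a\<close> z(1) _ le0 before] le0[OF z(1)] z(2) by simp
qed

lemma barrier_stays_negative:
  fixes F D :: "real \<Rightarrow> 'a \<Rightarrow> real"
  assumes "finite A"
    and der: "\<And>r z. r \<ge> a \<Longrightarrow> z \<in> A \<Longrightarrow> ((\<lambda>r. F r z) has_real_derivative D r z) (at r within {a..})"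
    and init: "\<And>z. z \<in> A \<Longrightarrow> F a z < 0"
    and touch: "\<And>r z. r > a \<Longrightarrow> z \<in> A \<Longrightarrow> F r z = 0 \<Longrightarrow> (\<And>z'. z' \<in> A \<Longrightarrow> F r z' \<le> 0) \<Longrightarrow> D r z < 0"
    and "r \<ge> a" "z \<in> A"
  shows "F r z < 0"
proof (rule ccontr)
  assume "\<not> F r z < 0"
  have "continuous_on {a..} (\<lambda>r. F r z)" if "z \<in> A" for z
    using der that by (auto simp: continuous_on_eq_continuous_within intro: DERIV_continuous)
  then obtain \<tau> z where \<tau>: "\<tau> > a" "z \<in> A" "F \<tau> z = 0" "\<And>z'. z' \<in> A \<Longrightarrow> F \<tau> z' \<le> 0"
    "\<And>r. a \<le> r \<Longrightarrow> r < \<tau> \<Longrightarrow> F r z < 0"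
    using first_touching_time[of A a F r z] \<open>finite A\<close> init \<open>r \<ge> a\<close> \<open>z \<in> A\<close> \<open>\<not> F r z < 0\<close>
    by (metis linorder_not_le)
  have "D \<tau> z \<ge> 0"
    using \<tau> by (intro has_real_derivative_nonneg_if_left_max[OF der]) (auto intro: less_imp_le)
  then show False using touch[OF \<tau>(1-4)] by simp
qed

context
  fixes Q :: "('x::finite \<Rightarrow> real) \<Rightarrow> ('x \<Rightarrow> real)"
  assumes Q: "lower_transition_rate_operator Q"
begin

lemma lower_rate_const: "Q (\<lambda>_. c) = (\<lambda>_. 0)"
  using Q unfolding lower_transition_rate_operator_def by blast

lemma lower_rate_superadditive: "Q (\<lambda>z. g z + h z) x \<ge> Q g x + Q h x"
  using Q unfolding lower_transition_rate_operator_def by blast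

lemma lower_rate_pos_homogeneous: "c \<ge> 0 \<Longrightarrow> Q (\<lambda>z. c * g z) x = c * Q g x"
  using Q unfolding lower_transition_rate_operator_def by blast

lemma lower_rate_indicator_nonneg: "x \<noteq> y \<Longrightarrow> Q (\<lambda>z. if z = y then 1 else 0) x \<ge> 0"
  using Q unfolding lower_transition_rate_operator_def by blast

lemma lower_rate_add_const: "Q (\<lambda>z. g z + c) = Q g"
proof
  fix x
  have "Q (\<lambda>z. g z + c) x \<ge> Q g x + Q (\<lambda>_. c) x"
    and "Q (\<lambda>z. (g z + c) + - c) x \<ge> Q (\<lambda>z. g z + c) x + Q (\<lambda>_. - c) x"
    by (rule lower_rate_superadditive)+
  then show "Q (\<lambda>z. g z + c) x = Q g x" by (simp add: lower_rate_const)
qed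

lemma lower_rate_sum_ge:
  assumes "finite S" "\<And>y. h y \<ge> 0"
  shows "Q (\<lambda>z. \<Sum>y\<in>S. h y * (if z = y then 1 else 0)) x
         \<ge> (\<Sum>y\<in>S. h y * Q (\<lambda>z. if z = y then 1 else 0) x)"
  using assms(1)
proof (induction S rule: finite_induct)
  case empty
  then show ?case using lower_rate_const[of 0] by simp
next
  case (insert y S)
  have "Q (\<lambda>z. h y * (if z = y then 1 else 0) + (\<Sum>y\<in>S. h y * (if z = y then 1 else 0))) x
     \<ge> Q (\<lambda>z. h y * (if z = y then 1 else 0)) x + Q (\<lambda>z. \<Sum>y\<in>S. h y * (if z = y then 1 else 0)) x"
    by (rule lower_rate_superadditive)
  then show ?case
    using insert lower_rate_pos_homogeneous[OF assms(2)] by simp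
qed

lemma lower_rate_positive_maximum_principle:
  assumes "\<And>y. g y \<ge> 0" "g x = 0"
  shows "Q g x \<ge> 0"
proof -
  have g: "g = (\<lambda>z. \<Sum>y\<in>-{x}. g y * (if z = y then 1 else 0))"
  proof
    fix z
    have "(\<Sum>y\<in>-{x}. g y * (if z = y then 1 else 0)) = (\<Sum>y\<in>-{x}. if y = z then g z else 0)"
      by (rule sum.cong) auto
    then show "g z = (\<Sum>y\<in>-{x}. g y * (if z = y then 1 else 0))"
      using assms(2) by (cases "z = x") auto
  qed
  have "0 \<le> (\<Sum>y\<in>-{x}. g y * Q (\<lambda>z. if z = y then 1 else 0) x)"
    using assms(1) lower_rate_indicator_nonneg by (intro sum_nonneg) auto
  also have "\<dots> \<le> Q g x"
    by (subst g, rule lower_rate_sum_ge) (use assms in auto)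
  finally show ?thesis .
qed

lemma lower_rate_mono_at:
  assumes "\<And>y. g y \<le> h y" "g x = h x"
  shows "Q g x \<le> Q h x"
proof -
  have "Q (\<lambda>z. g z + (h z - g z)) x \<ge> Q g x + Q (\<lambda>z. h z - g z) x"
    by (rule lower_rate_superadditive)
  moreover have "Q (\<lambda>z. h z - g z) x \<ge> 0"
    using assms by (intro lower_rate_positive_maximum_principle) auto
  ultimately show ?thesis by simp
qed

lemma lower_rate_ge_diagonal:
  assumes "\<And>y. g y \<ge> 0"
  shows "Q g x \<ge> g x * Q (\<lambda>z. if z = x then 1 else 0) x"
proof -
  let ?e = "\<lambda>z. if z = x then 1 else 0 :: real"
  have "Q (\<lambda>z. (g z - g x * ?e z) + g x * ?e z) x \<ge> Q (\<lambda>z. g z - g x * ?e z) x + Q (\<lambda>z. g x * ?e z) x"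
    by (rule lower_rate_superadditive)
  moreover have "Q (\<lambda>z. g z - g x * ?e z) x \<ge> 0"
    using assms by (intro lower_rate_positive_maximum_principle) auto
  moreover have "Q (\<lambda>z. g x * ?e z) x = g x * Q ?e x"
    using assms by (intro lower_rate_pos_homogeneous)
  ultimately show ?thesis by simp
qed

text \<open>Off the zeros of \<open>u\<close>, \<open>v - v z\<close> is dominated by a multiple of \<open>u\<close>.\<close>

lemma lower_rate_nonpos_if_max_on_zeros:
  assumes u: "\<And>y. u y \<ge> 0" "u z = 0" "Q u z \<le> 0"
    and v: "\<And>y. u y = 0 \<Longrightarrow> v y \<le> v z"
  shows "Q v z \<le> 0"
proof -
  define a where "a = (\<lambda>y. if u y = 0 then 0 else v y - v z)"
  define c where "c = (\<Sum>y\<in>{y. u y \<noteq> 0}. \<bar>v y - v z\<bar> / u y)"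
  have "c \<ge> 0" unfolding c_def using u(1) by (intro sum_nonneg divide_nonneg_nonneg) auto
  have a_le: "a y \<le> c * u y" for y
  proof (cases "u y = 0")
    case False
    then have "\<bar>v y - v z\<bar> / u y \<le> c" unfolding c_def using u(1) by (intro member_le_sum divide_nonneg_nonneg) auto
    then have "\<bar>v y - v z\<bar> / u y * u y \<le> c * u y" using u(1)[of y] by (rule mult_right_mono)
    then show ?thesis using False unfolding a_def by simp
  qed (simp add: a_def)
  have "Q a z \<le> Q (\<lambda>y. c * u y) z"
    using a_le u(2) by (intro lower_rate_mono_at) (auto simp: a_def)
  also have "\<dots> = c * Q u z" using \<open>c \<ge> 0\<close> by (rule lower_rate_pos_homogeneous)
  also have "\<dots> \<le> 0" using \<open>c \<ge> 0\<close> u(3) by (rule mult_nonneg_nonpos)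
  finally have "Q a z \<le> 0" .
  define b where "b = (\<lambda>y. if u y = 0 then v y - v z else 0)"
  have "Q (\<lambda>y. - b y) z \<ge> 0"
    using v u(2) by (intro lower_rate_positive_maximum_principle) (auto simp: b_def)
  moreover have "Q (\<lambda>y. (a y + b y) + - b y) z \<ge> Q (\<lambda>y. a y + b y) z + Q (\<lambda>y. - b y) z"
    by (rule lower_rate_superadditive)
  moreover have "(\<lambda>y. (a y + b y) + v z) = v" by (auto simp: a_def b_def)
  then have "Q (\<lambda>y. a y + b y) = Q v"
    using lower_rate_add_const[of "\<lambda>y. a y + b y" "v z"] by simp
  ultimately show ?thesis using \<open>Q a z \<le> 0\<close> by simp
qed

end

context
  fixes Q :: "('x::finite \<Rightarrow> real) \<Rightarrow> ('x \<Rightarrow> real)"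
    and T :: "real \<Rightarrow> ('x \<Rightarrow> real) \<Rightarrow> ('x \<Rightarrow> real)"
    and f :: "'x \<Rightarrow> real" and m :: real
  assumes Q: "lower_transition_rate_operator Q"
    and T: "is_lower_transition_semigroup Q T"
    and lower: "\<And>z. m \<le> f z"
begin

lemma semigroup_zero: "T 0 f = f"
  using T unfolding is_lower_transition_semigroup_def by blast

lemma semigroup_has_derivative:
  "0 \<le> a \<Longrightarrow> a \<le> r \<Longrightarrow> ((\<lambda>s. T s f z) has_real_derivative Q (T r f) z) (at r within {a..})"
proof -
  assume "0 \<le> a" "a \<le> r"
  then have "((\<lambda>s. T s f z) has_real_derivative Q (T r f) z) (at r within {0..})"
    using T unfolding is_lower_transition_semigroup_def by simp
  then show ?thesis by (rule DERIV_subset) (use \<open>0 \<le> a\<close> in auto)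
qed

lemma semigroup_rate_shift: "Q (\<lambda>y. T r f y - c) = Q (T r f)"
  using lower_rate_add_const[OF Q, of "T r f" "- c"] by simp

lemma semigroup_ge_lower_bound:
  assumes "r \<ge> 0"
  shows "m \<le> T r f z"
proof (rule ccontr)
  assume "\<not> m \<le> T r f z"
  define \<epsilon> where "\<epsilon> = (m - T r f z) / (1 + r)"
  have "\<epsilon> > 0" using \<open>\<not> m \<le> T r f z\<close> assms unfolding \<epsilon>_def by auto
  then have init: "m - \<epsilon> < f z'" for z' using lower[of z'] by linarith
  have "m - \<epsilon> * (1 + r) - T r f z < 0"
  proof (rule barrier_stays_negative[where F = "\<lambda>r z. m - \<epsilon> * (1 + r) - T r f z"
        and D = "\<lambda>r z. - \<epsilon> - Q (T r f) z" and A = UNIV])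
    fix r :: real and z :: 'x
    assume "r > 0" and touch: "m - \<epsilon> * (1 + r) - T r f z = 0"
      and below: "\<And>z'. z' \<in> UNIV \<Longrightarrow> m - \<epsilon> * (1 + r) - T r f z' \<le> 0"
    have "Q (\<lambda>_. m - \<epsilon> * (1 + r)) z \<le> Q (T r f) z"
      using below touch by (intro lower_rate_mono_at[OF Q]) auto
    then show "- \<epsilon> - Q (T r f) z < 0" using \<open>\<epsilon> > 0\<close> by (simp add: lower_rate_const[OF Q])
  qed (use init assms in
    \<open>auto simp: semigroup_zero intro!: derivative_eq_intros semigroup_has_derivative\<close>)
  then show False unfolding \<epsilon>_def using assms by (simp add: field_simps)
qed

text \<open>With \<open>q = Q \<one>\<^sub>x x\<close> we have \<open>Q (T\<^sub>r f) x \<ge> q (T\<^sub>r f x - m)\<close>, so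
  \<open>T\<^sub>r f x - m\<close> stays above the barrier \<open>\<delta> exp (- K (r - s))\<close> for \<open>K = 1 - q\<close>.\<close>

lemma semigroup_pos_persists:
  assumes "0 \<le> s" "s \<le> r" and pos: "m < T s f x"
  shows "m < T r f x"
proof -
  define \<delta> where "\<delta> = (T s f x - m) / 2"
  define K where "K = 1 - Q (\<lambda>z. if z = x then 1 else 0) x"
  have "\<delta> > 0" using pos unfolding \<delta>_def by simp
  have "\<delta> * exp (- K * (r - s)) - (T r f x - m) < 0"
  proof (rule barrier_stays_negative[where A = "{x}" and F = "\<lambda>r z. \<delta> * exp (- K * (r - s)) - (T r f z - m)"
        and D = "\<lambda>r z. \<delta> * (exp (- K * (r - s)) * - K) - Q (T r f) z"])
    fix r :: real and z
    assume "r > s" "z \<in> {x}" and touch: "\<delta> * exp (- K * (r - s)) - (T r f z - m) = 0"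
    have "(T r f x - m) * Q (\<lambda>z. if z = x then 1 else 0) x \<le> Q (\<lambda>y. T r f y - m) x"
      using semigroup_ge_lower_bound \<open>r > s\<close> assms(1)
      by (intro lower_rate_ge_diagonal[OF Q]) auto
    then have "\<delta> * exp (- K * (r - s)) * (1 - K) \<le> Q (T r f) x"
      using touch \<open>z \<in> {x}\<close> by (simp add: semigroup_rate_shift K_def)
    moreover have "\<delta> * exp (- K * (r - s)) > 0" using \<open>\<delta> > 0\<close> by simp
    ultimately show "\<delta> * (exp (- K * (r - s)) * - K) - Q (T r f) z < 0"
      using \<open>z \<in> {x}\<close> by (simp add: algebra_simps)
  qed (use \<open>\<delta> > 0\<close> assms in
    \<open>auto simp: \<delta>_def intro!: derivative_eq_intros semigroup_has_derivative\<close>)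
  moreover have "\<delta> * exp (- K * (r - s)) > 0" using \<open>\<delta> > 0\<close> by simp
  ultimately show ?thesis by linarith
qed

lemma semigroup_rate_nonpos_at_min:
  assumes "s > 0" "T s f z \<le> m"
  shows "Q (T s f) z \<le> 0"
proof -
  have "((\<lambda>r. - T r f z) has_real_derivative - Q (T s f) z) (at s within {0..})"
    using assms by (intro DERIV_minus semigroup_has_derivative) auto
  moreover have "- T r f z \<le> - T s f z" if "0 \<le> r" for r
    using semigroup_ge_lower_bound[OF that] by (simp add: order_trans[OF assms(2)])
  ultimately have "- Q (T s f) z \<ge> 0"
    using assms(1) by (blast intro: has_real_derivative_nonneg_if_left_max)
  then show ?thesis by simp
qed

text \<open>On \<open>Z = {z. T\<^sub>s f z \<le> m}\<close> the functions \<open>T\<^sub>r f - m\<close> stay below the barrier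
  \<open>\<epsilon> (1 + r - s)\<close>: at a touching point, \<open>T\<^sub>r f - m\<close> is maximal on the zero set of
  \<open>T\<^sub>s f - m\<close>, whence its rate is \<open>\<le> 0\<close>.\<close>

lemma semigroup_min_persists:
  assumes "s > 0" "s \<le> r" and at_min: "T s f x \<le> m"
  shows "T r f x \<le> m"
proof (rule ccontr)
  assume "\<not> T r f x \<le> m"
  define Z where "Z = {z. T s f z \<le> m}"
  define \<epsilon> where "\<epsilon> = (T r f x - m) / (1 + r - s)"
  have "\<epsilon> > 0" using \<open>\<not> T r f x \<le> m\<close> assms(2) unfolding \<epsilon>_def by simp
  have u: "T s f y - m \<ge> 0" for y
    using semigroup_ge_lower_bound assms(1) by (simp add: less_imp_le)
  have "T r f x - m - \<epsilon> * (1 + r - s) < 0"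
  proof (rule barrier_stays_negative[where A = Z and F = "\<lambda>r z. T r f z - m - \<epsilon> * (1 + r - s)"
        and D = "\<lambda>r z. Q (T r f) z - \<epsilon>"])
    fix r :: real and z
    assume "z \<in> Z" and touch: "T r f z - m - \<epsilon> * (1 + r - s) = 0"
      and below: "\<And>z'. z' \<in> Z \<Longrightarrow> T r f z' - m - \<epsilon> * (1 + r - s) \<le> 0"
    have "T s f z - m = 0" using \<open>z \<in> Z\<close> u[of z] unfolding Z_def by simp
    then have "Q (\<lambda>y. T r f y - m) z \<le> 0"
    proof (rule lower_rate_nonpos_if_max_on_zeros[OF Q u])
      show "Q (\<lambda>y. T s f y - m) z \<le> 0"
        using semigroup_rate_nonpos_at_min assms(1) \<open>z \<in> Z\<close>
        by (simp add: semigroup_rate_shift Z_def)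
      show "T r f y - m \<le> T r f z - m" if "T s f y - m = 0" for y
        using below[of y] touch that unfolding Z_def by simp
    qed
    then show "Q (T r f) z - \<epsilon> < 0" using \<open>\<epsilon> > 0\<close> by (simp add: semigroup_rate_shift)
  qed (use \<open>\<epsilon> > 0\<close> assms at_min in
    \<open>auto simp: Z_def intro!: derivative_eq_intros semigroup_has_derivative\<close>)
  then show False using assms(2) unfolding \<epsilon>_def by (simp add: field_simps)
qed

end

theorem lemma7:
  fixes Q :: "('x::finite \<Rightarrow> real) \<Rightarrow> ('x \<Rightarrow> real)"
    and T :: "real \<Rightarrow> ('x \<Rightarrow> real) \<Rightarrow> ('x \<Rightarrow> real)"
    and f :: "'x \<Rightarrow> real" and x :: 'x and t s :: real
  assumes "lower_transition_rate_operator Q"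
    and "is_lower_transition_semigroup Q T"
    and "t > 0" and "s > 0"
  shows "T t f x > Min (range f) \<longleftrightarrow> T s f x > Min (range f)"
proof -
  define m where "m = Min (range f)"
  have lower: "\<And>z. m \<le> f z" unfolding m_def by simp
  have "m < T a f x \<Longrightarrow> m < T b f x" if "a > 0" "b > 0" for a b
  proof (cases "a \<le> b")
    case True
    then show "m < T a f x \<Longrightarrow> m < T b f x"
      using semigroup_pos_persists[where f = f, OF assms(1,2) lower, of a b x] that by simp
  next
    case False
    then show "m < T a f x \<Longrightarrow> m < T b f x"
      using semigroup_min_persists[where f = f, OF assms(1,2) lower, of b a x] that by force
  qed
  then show ?thesis unfolding m_def using assms(3,4) by blast
qed

end
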